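(* Let $C\subset[0,1]^2$ be a Cantor set generated by a sequence of positive integers $(n_k)_{k\ge1}$ with $n_{2k-1}\ge n_{2k}$ for all $k$ (construction described in the context). Then $\pi_0(C)=[0,1]$, where $\pi_0(x,y)=x$.
   Context: Let $(n_k)_{k\ge1}$ be positive integers with $n_{2k-1}\ge n_{2k}$ for all $k\ge1$, and set $N_j=n_1+\dots+n_j$, $N_0=0$. All squares below are closed grid squares, i.e. squares $[i4^{-N},(i+1)4^{-N}]\times[j4^{-N},(j+1)4^{-N}]$; a column of width $4^{-N}$ is a strip $[j4^{-N},(j+1)4^{-N}]\times[0,1]$. Let $C_0=\{[0,1]^2\}$. For $k\ge0$, given the collection $C_{2k}$ of squares of side $4^{-N_{2k}}$: (i) each $Q\in C_{2k}$ is subdivided into $4^{2n_{2k+1}}$ squares of side $4^{-N_{2k+1}}$ and $2^{3n_{2k+1}}$ of them are chosen so that each column of width $4^{-N_{2k+1}}$ meeting the interior of $Q$ contains exactly $2^{n_{2k+1}}$ chosen squares inside $Q$; $C_{2k+1}$ is the collection of all chosen squares. (ii) Each square of $C_{2k+1}$ is subdivided into $4^{2n_{2k+2}}$ squares of side $4^{-N_{2k+2}}$ and $2^{n_{2k+2}}$ of them are chosen, so that for each $Q\in C_{2k}$: every column of width $4^{-N_{2k+2}}$ meeting the interior of $Q$ contains at least one chosen square inside $Q$; and among the chosen squares inside $Q$ there are two whose orthogonal projections onto the line $y=x$ coincide, and two whose orthogonal projections onto the line $y=-x$ coincide. $C_{2k+2}$ is the collection of all chosen squares. Identifying $C_m$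 with the union of its squares, the Cantor set generated is $C=\bigcap_{m\ge1}C_m$. *)

theory Defs
  imports "HOL-Analysis.Analysis"
begin

text \<open>The sequence n is indexed from 1 (the value n 0 is irrelevant).
  N_j = n_1 + ... + n_j.\<close>
definition Nsum :: "(nat \<Rightarrow> nat) \<Rightarrow> nat \<Rightarrow> nat" where
  "Nsum n j = (\<Sum>i=1..j. n i)"

definition sq :: "(nat \<Rightarrow> nat) \<Rightarrow> nat \<Rightarrow> nat \<times> nat \<Rightarrow> (real \<times> real) set" where
  "sq n m ij =
     {real (fst ij) / 4 ^ Nsum n m .. real (fst ij + 1) / 4 ^ Nsum n m} \<times>
     {real (snd ij) / 4 ^ Nsum n m .. real (snd ij + 1) / 4 ^ Nsum n m}"

text \<open>P (a grid index d 4-adic refinements finer than Q) lies inside Q.\<close>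
definition inside :: "nat \<Rightarrow> nat \<times> nat \<Rightarrow> nat \<times> nat \<Rightarrow> bool" where
  "inside d Q P \<longleftrightarrow> fst P div 4 ^ d = fst Q \<and> snd P div 4 ^ d = snd Q"

definition proj_diag :: "real \<times> real \<Rightarrow> real \<times> real" where
  "proj_diag p = ((fst p + snd p) / 2, (fst p + snd p) / 2)"

definition proj_anti :: "real \<times> real \<Rightarrow> real \<times> real" where
  "proj_anti p = ((fst p - snd p) / 2, (snd p - fst p) / 2)"

text \<open>Cs m is the collection C_m of chosen squares (given by grid indices at level N_m).\<close>
definition cantor_construction :: "(nat \<Rightarrow> nat) \<Rightarrow> (nat \<Rightarrow> (nat \<times> nat) set) \<Rightarrow> bool" where
  "cantor_construction n Cs \<longleftrightarrow>
     Cs 0 = {(0, 0)} \<and>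
     (\<forall>k. let a = n (2*k+1); b = n (2*k+2) in
        \<comment> \<open>step (i)\<close>
        (\<forall>P\<in>Cs (2*k+1). \<exists>Q\<in>Cs (2*k). inside a Q P) \<and>
        (\<forall>Q\<in>Cs (2*k).
            card {P\<in>Cs (2*k+1). inside a Q P} = 2 ^ (3*a) \<and>
            (\<forall>c. c div 4 ^ a = fst Q \<longrightarrow>
                 card {P\<in>Cs (2*k+1). inside a Q P \<and> fst P = c} = 2 ^ a)) \<and>
        \<comment> \<open>step (ii)\<close>
        (\<forall>P\<in>Cs (2*k+2). \<exists>Q\<in>Cs (2*k+1). inside b Q P) \<and>
        (\<forall>Q\<in>Cs (2*k+1). card {P\<in>Cs (2*k+2). inside b Q P} = 2 ^ b) \<and>
        (\<forall>Q\<in>Cs (2*k).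
            (\<forall>c. c div 4 ^ (a+b) = fst Q \<longrightarrow>
                 (\<exists>P\<in>Cs (2*k+2). inside (a+b) Q P \<and> fst P = c)) \<and>
            (\<exists>P1\<in>Cs (2*k+2). \<exists>P2\<in>Cs (2*k+2).
                 inside (a+b) Q P1 \<and> inside (a+b) Q P2 \<and> P1 \<noteq> P2 \<and>
                 proj_diag ` sq n (2*k+2) P1 = proj_diag ` sq n (2*k+2) P2) \<and>
            (\<exists>P1\<in>Cs (2*k+2). \<exists>P2\<in>Cs (2*k+2).
                 inside (a+b) Q P1 \<and> inside (a+b) Q P2 \<and> P1 \<noteq> P2 \<and>
                 proj_anti ` sq n (2*k+2) P1 = proj_anti ` sq n (2*k+2) P2)))"

definition cantor_set :: "(nat \<Rightarrow> nat) \<Rightarrow> (nat \<Rightarrow> (nat \<times> nat) set) \<Rightarrow> (real \<times> real) set" where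
  "cantor_set n Cs = (\<Inter>m\<in>{1..}. \<Union> (sq n m ` Cs m))"

end

theory Submission
  imports Defs
begin

(* Every column of every level C_m meets a chosen square of C_m, so the union of the squares of
   C_m projects onto all of [0,1]. These unions decrease and are compact, and the projection of a
   decreasing intersection of compact sets is the intersection of the projections. *)

lemma image_Inter_decseq_compact:
  fixes A :: "nat \<Rightarrow> 'a::heine_borel set" and f :: "'a \<Rightarrow> 'b::t1_space"
  assumes dec: "decseq A" and compact: "\<And>m. compact (A m)" and cont: "continuous_on UNIV f"
  shows "f ` (\<Inter>m. A m) = (\<Inter>m. f ` A m)"
proof
  show "(\<Inter>m. f ` A m) \<subseteq> f ` (\<Inter>m. A m)"
  proof
    fix y assume y: "y \<in> (\<Inter>m. f ` A m)"
    define B where "B m = A m \<inter> f -` {y}" for m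
    have "compact (B m)" for m
      unfolding B_def using compact cont by (intro compact_Int_closed closed_vimage closed_singleton)
    moreover have "B m \<noteq> {}" for m
      using y unfolding B_def by blast
    moreover have "B k \<subseteq> B m" if "m \<le> k" for m k
      using decseqD[OF dec that] unfolding B_def by blast
    ultimately obtain p where "p \<in> \<Inter>(range B)"
      using compact_nest[of B] by blast
    then show "y \<in> f ` (\<Inter>m. A m)"
      unfolding B_def by blast
  qed
qed blast

lemma UN_grid_intervals:
  fixes M :: nat
  assumes "M > 0"
  shows "(\<Union>c<M. {real c / M .. real (c + 1) / M}) = {0..1}"
proof
  show "(\<Union>c<M. {real c / M .. real (c + 1) / M}) \<subseteq> {0..1}"
  proof (intro UN_least subsetI)
    fix c x assume "c \<in> {..<M}" "x \<in> {real c / M .. real (c + 1) / M}"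
    moreover have "real (c + 1) / M \<le> 1"
      using \<open>c \<in> {..<M}\<close> by (simp add: divide_simps)
    moreover have "0 \<le> real c / M"
      by simp
    ultimately show "x \<in> {0..1}"
      unfolding atLeastAtMost_iff by linarith
  qed
  show "{0..1} \<subseteq> (\<Union>c<M. {real c / M .. real (c + 1) / M})"
  proof
    fix x :: real assume x: "x \<in> {0..1}"
    define c where "c = min (nat \<lfloor>x * M\<rfloor>) (M - 1)"
    have "c < M"
      using assms unfolding c_def by linarith
    moreover have "real c \<le> x * M" "x * M \<le> real c + 1"
      using x assms unfolding c_def by (auto simp: min_def of_nat_diff) linarith+
    ultimately show "x \<in> (\<Union>c<M. {real c / M .. real (c + 1) / M})"
      using assms by (auto simp: divide_simps)
  qed
qed

lemma div_power_less_power_iff: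
  fixes x b :: nat
  assumes "b > 0"
  shows "x div b ^ d < b ^ N \<longleftrightarrow> x < b ^ (N + d)"
  using assms by (simp add: div_less_iff_less_mult power_add)

lemma grid_interval_subset:
  fixes p q b :: nat
  assumes "b > 0" and "p div b ^ d = q"
  shows "{real p / b ^ (N + d) .. real (p + 1) / b ^ (N + d)}
           \<subseteq> {real q / b ^ N .. real (q + 1) / b ^ N}"
proof -
  have "q * b ^ d \<le> p"
    using assms(2) div_times_less_eq_dividend[of p "b ^ d"] by simp
  then have lower: "real q \<le> real p / b ^ d"
    using assms(1) by (simp add: field_simps flip: of_nat_mult of_nat_power)
  have "p div b ^ d < q + 1"
    using assms(2) by simp
  then have "p + 1 \<le> (q + 1) * b ^ d"
    using assms(1) by (simp add: div_less_iff_less_mult)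
  then have upper: "real (p + 1) / b ^ d \<le> real (q + 1)"
    using assms(1) by (simp add: field_simps flip: of_nat_mult of_nat_power of_nat_add)
  have rescale: "real x / b ^ (N + d) = real x / b ^ d / b ^ N" for x
    by (simp add: power_add mult.commute)
  have "real q / b ^ N \<le> real p / b ^ d / b ^ N"
    using lower by (rule divide_right_mono) simp
  moreover have "real (p + 1) / b ^ d / b ^ N \<le> real (q + 1) / b ^ N"
    using upper by (rule divide_right_mono) simp
  ultimately show ?thesis
    unfolding rescale atLeastatMost_subset_iff by blast
qed

lemma Nsum_Suc: "Nsum n (Suc m) = Nsum n m + n (Suc m)"
  by (simp add: Nsum_def)

lemma sq_subset_parent:
  assumes "inside (n (Suc m)) Q P"
  shows "sq n (Suc m) P \<subseteq> sq n m Q"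
proof -
  have "fst P div 4 ^ n (Suc m) = fst Q" and "snd P div 4 ^ n (Suc m) = snd Q"
    using assms by (simp_all add: inside_def)
  from this[THEN grid_interval_subset[where b = 4 and N = "Nsum n m", rotated]] show ?thesis
    unfolding sq_def Nsum_Suc by (intro Sigma_mono) simp_all
qed

lemma compact_sq: "compact (sq n m P)"
  unfolding sq_def by (intro compact_Times compact_Icc)

lemma fst_image_sq:
  "fst ` sq n m P = {real (fst P) / 4 ^ Nsum n m .. real (fst P + 1) / 4 ^ Nsum n m}"
  unfolding sq_def by (simp add: divide_right_mono)

lemma cantor_construction_base:
  assumes "cantor_construction n Cs"
  shows "Cs 0 = {(0, 0)}"
  using assms unfolding cantor_construction_def by blast

lemma cantor_construction_parent:
  assumes "cantor_construction n Cs" and "P \<in> Cs (Suc m)"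
  shows "\<exists>Q\<in>Cs m. inside (n (Suc m)) Q P"
proof (cases "even m")
  case True
  then obtain k where "m = 2 * k" by blast
  then show ?thesis
    using assms unfolding cantor_construction_def Let_def by simp
next
  case False
  then obtain k where "m = 2 * k + 1" by (blast elim: oddE)
  then show ?thesis
    using assms unfolding cantor_construction_def Let_def by simp
qed

lemma cantor_construction_odd_column:
  assumes "cantor_construction n Cs" and "Q \<in> Cs (2 * k)"
    and "c div 4 ^ n (2 * k + 1) = fst Q"
  shows "\<exists>P\<in>Cs (2 * k + 1). fst P = c"
proof -
  have "card {P\<in>Cs (2 * k + 1). inside (n (2 * k + 1)) Q P \<and> fst P = c} = 2 ^ n (2 * k + 1)"
    using assms unfolding cantor_construction_def Let_def by simp
  then have "{P\<in>Cs (2 * k + 1). inside (n (2 * k + 1)) Q P \<and> fst P = c} \<noteq> {}"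
    by (metis card.empty power_not_zero zero_neq_numeral)
  then show ?thesis by blast
qed

lemma cantor_construction_even_column:
  assumes "cantor_construction n Cs" and "Q \<in> Cs (2 * k)"
    and "c div 4 ^ (n (2 * k + 1) + n (2 * k + 2)) = fst Q"
  shows "\<exists>P\<in>Cs (2 * k + 2). fst P = c"
proof -
  have "\<exists>P\<in>Cs (2 * k + 2). inside (n (2 * k + 1) + n (2 * k + 2)) Q P \<and> fst P = c"
    using assms unfolding cantor_construction_def Let_def by simp
  then show ?thesis by blast
qed

lemma cantor_construction_column_even:
  assumes "cantor_construction n Cs" and "c < 4 ^ Nsum n (2 * k)"
  shows "\<exists>P\<in>Cs (2 * k). fst P = c"
  using assms(2)
proof (induction k arbitrary: c)
  case 0
  then show ?case
    using cantor_construction_base[OF assms(1)] by (simp add: Nsum_def)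
next
  case (Suc k)
  let ?d = "n (2 * k + 1) + n (2 * k + 2)"
  have "Nsum n (2 * Suc k) = Nsum n (2 * k) + ?d"
    by (simp add: Nsum_def)
  then have "c div 4 ^ ?d < 4 ^ Nsum n (2 * k)"
    using Suc.prems by (simp add: div_power_less_power_iff)
  then obtain Q where "Q \<in> Cs (2 * k)" and "fst Q = c div 4 ^ ?d"
    using Suc.IH by blast
  then show ?case
    using cantor_construction_even_column[OF assms(1)] by simp
qed

lemma cantor_construction_column:
  assumes "cantor_construction n Cs" and "c < 4 ^ Nsum n m"
  shows "\<exists>P\<in>Cs m. fst P = c"
proof (cases "even m")
  case True
  then show ?thesis
    using assms cantor_construction_column_even by blast
next
  case False
  then obtain k where m: "m = 2 * k + 1" by (blast elim: oddE)
  then have "c div 4 ^ n (2 * k + 1) < 4 ^ Nsum n (2 * k)"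
    using assms(2) by (simp add: Nsum_def div_power_less_power_iff)
  then obtain Q where "Q \<in> Cs (2 * k)" and "fst Q = c div 4 ^ n (2 * k + 1)"
    using assms(1) cantor_construction_column_even by blast
  then show ?thesis
    using cantor_construction_odd_column[OF assms(1)] m by simp
qed

lemma cantor_construction_index_bound:
  assumes "cantor_construction n Cs" and "P \<in> Cs m"
  shows "fst P < 4 ^ Nsum n m \<and> snd P < 4 ^ Nsum n m"
  using assms(2)
proof (induction m arbitrary: P)
  case 0
  then show ?case
    using cantor_construction_base[OF assms(1)] by (simp add: Nsum_def)
next
  case (Suc m)
  obtain Q where "Q \<in> Cs m" and "inside (n (Suc m)) Q P"
    using cantor_construction_parent[OF assms(1) Suc.prems] by blast
  with Suc.IH show ?case
    by (simp add: inside_def Nsum_Suc flip: div_power_less_power_iff)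
qed

lemma finite_cantor_construction:
  assumes "cantor_construction n Cs"
  shows "finite (Cs m)"
proof (rule finite_subset)
  show "Cs m \<subseteq> {..<4 ^ Nsum n m} \<times> {..<4 ^ Nsum n m}"
    using cantor_construction_index_bound[OF assms] by fastforce
qed simp

definition cantor_level ::
    "(nat \<Rightarrow> nat) \<Rightarrow> (nat \<Rightarrow> (nat \<times> nat) set) \<Rightarrow> nat \<Rightarrow> (real \<times> real) set" where
  "cantor_level n Cs m = \<Union> (sq n m ` Cs m)"

lemma compact_cantor_level:
  assumes "cantor_construction n Cs"
  shows "compact (cantor_level n Cs m)"
  unfolding cantor_level_def
  using finite_cantor_construction[OF assms] compact_sq by (intro compact_Union) auto

lemma decseq_cantor_level:
  assumes "cantor_construction n Cs"
  shows "decseq (cantor_level n Cs)"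
proof (rule decseq_SucI)
  show "cantor_level n Cs (Suc m) \<subseteq> cantor_level n Cs m" for m
  proof (unfold cantor_level_def, rule UN_least)
    fix P assume "P \<in> Cs (Suc m)"
    then obtain Q where "Q \<in> Cs m" and "inside (n (Suc m)) Q P"
      using cantor_construction_parent[OF assms] by blast
    then show "sq n (Suc m) P \<subseteq> \<Union> (sq n m ` Cs m)"
      using sq_subset_parent by blast
  qed
qed

lemma cantor_set_eq_Inter_levels:
  assumes "cantor_construction n Cs"
  shows "cantor_set n Cs = (\<Inter>m. cantor_level n Cs m)"
proof -
  have "(\<Inter>m\<in>{1..}. cantor_level n Cs m) \<subseteq> cantor_level n Cs m" for m
  proof (cases "m = 0")
    case True
    have "cantor_level n Cs 1 \<subseteq> cantor_level n Cs 0"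
      using decseqD[OF decseq_cantor_level[OF assms]] by simp
    then show ?thesis
      using True by auto
  qed auto
  then have "(\<Inter>m\<in>{1..}. cantor_level n Cs m) = (\<Inter>m. cantor_level n Cs m)"
    by blast
  then show ?thesis
    unfolding cantor_set_def cantor_level_def by simp
qed

lemma fst_image_cantor_level:
  assumes "cantor_construction n Cs"
  shows "fst ` cantor_level n Cs m = {0..1}"
proof -
  define M :: nat where "M = 4 ^ Nsum n m"
  have "fst ` Cs m \<subseteq> {..<M}"
    using cantor_construction_index_bound[OF assms] unfolding M_def by auto
  moreover have "{..<M} \<subseteq> fst ` Cs m"
    using cantor_construction_column[OF assms] unfolding M_def by force
  ultimately have columns: "fst ` Cs m = {..<M}"
    by (rule antisym)
  have "fst ` cantor_level n Cs m = (\<Union>P\<in>Cs m. {real (fst P) / M .. real (fst P + 1) / M})"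
    unfolding cantor_level_def image_UN fst_image_sq M_def by simp
  also have "\<dots> = (\<Union>c<M. {real c / M .. real (c + 1) / M})"
    unfolding columns[symmetric] by simp
  also have "\<dots> = {0..1}"
    by (rule UN_grid_intervals) (simp add: M_def)
  finally show ?thesis .
qed

theorem proposition3p2:
  fixes n :: "nat \<Rightarrow> nat" and Cs :: "nat \<Rightarrow> (nat \<times> nat) set"
  assumes "\<forall>k\<ge>1. 0 < n k"
    and "\<forall>k\<ge>1. n (2*k - 1) \<ge> n (2*k)"
    and "cantor_construction n Cs"
  shows "fst ` cantor_set n Cs = {0..1}"
proof -
  have "fst ` cantor_set n Cs = (\<Inter>m. fst ` cantor_level n Cs m)"
    unfolding cantor_set_eq_Inter_levels[OF assms(3)]
    using decseq_cantor_level[OF assms(3)] compact_cantor_level[OF assms(3)]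
    by (intro image_Inter_decseq_compact continuous_on_fst continuous_on_id)
  also have "\<dots> = {0..1}"
    using fst_image_cantor_level[OF assms(3)] by simp
  finally show ?thesis .
qed

end
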